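(* Let $r\ge2$ be an integer and $m,\ell$ positive integers with $2^m>r$ and $2^{m+\ell}>r^2$. Let $z\in\{0,1,\dots,r-1\}$, $j=j_0(z)$, and let $\mathcal L\subset\mathbb R^2$ be the lattice spanned by $(j,\tfrac12)$ and $(2^{m+\ell},0)$. Then, up to sign, the shortest non-zero vector of $\mathcal L$ is unique and equals $\vec u=(\alpha_0(z)/d,\ \tilde r/2)$ where $d=\gcd(r,z)$, $\tilde r=r/d$ and $\alpha_0(z)=rj_0(z)-2^{m+\ell}z$; in particular its second component is $\pm r/(2\gcd(r,z))$.
   Context: For real $f$, $\mathrm{round}(f)$ is the integer $f+\delta_f$ with $\delta_f\in(-1/2,1/2]$. For $z\in\{0,\dots,r-1\}$, $j_0(z)=\mathrm{round}(2^{m+\ell}z/r)$; then $\alpha_0(z)=rj_0(z)-2^{m+\ell}z\in(-r/2,r/2]$. Convention: $\gcd(r,0)=r$. Norms are Euclidean. *)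

theory Defs
  imports "HOL-Analysis.Analysis"
begin

text \<open>round(f) = f + delta with delta in (-1/2,1/2], i.e. rounding half up.\<close>
definition round_hu :: "real \<Rightarrow> int" where
  "round_hu f = \<lfloor>f + 1/2\<rfloor>"

definition j0 :: "nat \<Rightarrow> nat \<Rightarrow> nat \<Rightarrow> nat \<Rightarrow> int" where
  "j0 r m l z = round_hu (2 ^ (m + l) * real z / real r)"

definition alpha0 :: "nat \<Rightarrow> nat \<Rightarrow> nat \<Rightarrow> nat \<Rightarrow> int" where
  "alpha0 r m l z = int r * j0 r m l z - 2 ^ (m + l) * int z"

definition lattice2 :: "real \<times> real \<Rightarrow> real \<times> real \<Rightarrow> (real \<times> real) set" where
  "lattice2 b1 b2 = {of_int a *\<^sub>R b1 + of_int b *\<^sub>R b2 | a b. True}"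

end

theory Submission
  imports Defs
begin

text \<open>
  Write \<open>N = 2^(m+l)\<close> and \<open>\<alpha> = r j - N z\<close>. A lattice vector \<open>(a j + b N, a/2)\<close> satisfies
  \<open>r (a j + b N) = N k + a \<alpha>\<close> with \<open>k = a z + b r\<close>. Since \<open>|\<alpha>| \<le> r/2\<close>, every lattice vector
  at most as long as \<open>u\<close> has norm at most \<open>r/\<surd>2\<close>, which forces \<open>N |k| \<le> r\<^sup>2 < N\<close>, so \<open>k = 0\<close>.
  The vectors with \<open>k = 0\<close> are exactly the integer multiples of \<open>u\<close>, because
  \<open>r / gcd r z\<close> and \<open>z / gcd r z\<close> are coprime.
\<close>

lemma abs_round_hu_diff_le: "\<bar>real_of_int (round_hu f) - f\<bar> \<le> 1/2"
  unfolding round_hu_def by linarith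

lemma abs_alpha0_le:
  assumes "r > 0"
  shows "\<bar>real_of_int (alpha0 r m l z)\<bar> \<le> real r / 2"
proof -
  define f where "f = 2 ^ (m + l) * real z / real r"
  have "real_of_int (alpha0 r m l z) = real r * (real_of_int (round_hu f) - f)"
    using assms unfolding alpha0_def j0_def f_def by (simp add: algebra_simps)
  then show ?thesis
    using abs_round_hu_diff_le[of f] assms by (simp add: abs_mult)
qed

lemma lattice2_iff:
  "v \<in> lattice2 (x1, y1) (x2, y2) \<longleftrightarrow>
    (\<exists>a b :: int. v = (of_int a * x1 + of_int b * x2, of_int a * y1 + of_int b * y2))"
  unfolding lattice2_def by auto

lemma coprime_linear_relation:
  fixes p q a b :: int
  assumes "coprime p q" and "p \<noteq> 0" and "a * q = b * p"
  shows "\<exists>t. a = t * p \<and> b = t * q"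
proof -
  have "p dvd a * q" using assms(3) by simp
  then obtain t where a: "a = p * t"
    using assms(1) coprime_dvd_mult_left_iff by blast
  then have "b * p = (t * q) * p" using assms(3) by (metis mult.assoc mult.commute)
  then have "b = t * q" using assms(2) by simp
  with a show ?thesis by (auto simp: mult.commute)
qed

lemma short_vector_residue_eq_0:
  fixes N r X a \<alpha> :: real and k :: int
  assumes "r\<^sup>2 < N" and "0 \<le> r" and "\<bar>\<alpha>\<bar> \<le> r / 2"
    and "r * X = N * of_int k + a * \<alpha>"
    and "X\<^sup>2 + (a / 2)\<^sup>2 \<le> r\<^sup>2 / 2"
  shows "k = 0"
proof (rule ccontr)
  assume "k \<noteq> 0"
  have "0 \<le> N" using assms(1) zero_le_power2[of r] by linarith
  have "1 \<le> \<bar>real_of_int k\<bar>" using \<open>k \<noteq> 0\<close> by linarith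
  then have "N \<le> N * \<bar>of_int k\<bar>"
    using \<open>0 \<le> N\<close> by (simp add: mult_le_cancel_left1)
  also have "\<dots> = \<bar>r * X - a * \<alpha>\<bar>"
    using assms(4) \<open>0 \<le> N\<close> by (simp add: abs_mult)
  also have "\<dots> \<le> r * \<bar>X\<bar> + \<bar>a\<bar> * \<bar>\<alpha>\<bar>"
    using abs_triangle_ineq4[of "r * X" "a * \<alpha>"] assms(2) by (simp add: abs_mult)
  also have "\<dots> \<le> r * (\<bar>X\<bar> + \<bar>a\<bar> / 2)"
    using mult_left_mono[OF assms(3), of "\<bar>a\<bar>"] by (simp add: algebra_simps)
  also have "\<dots> \<le> r * r"
  proof -
    have "(\<bar>X\<bar> + \<bar>a\<bar> / 2)\<^sup>2 \<le> 2 * (X\<^sup>2 + (a / 2)\<^sup>2)"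
      using zero_le_power2[of "\<bar>X\<bar> - \<bar>a\<bar> / 2"] by (simp add: power2_eq_square algebra_simps)
    also have "\<dots> \<le> r\<^sup>2" using assms(5) by simp
    finally have "\<bar>X\<bar> + \<bar>a\<bar> / 2 \<le> r" using assms(2) by (rule power2_le_imp_le)
    then show ?thesis using assms(2) by (rule mult_left_mono)
  qed
  finally show False using assms(1) by (simp add: power2_eq_square)
qed

lemma lattice2_shortest_vector:
  fixes r z N :: nat and j :: int
  assumes "r > 0" and "r\<^sup>2 < N" and "\<bar>real_of_int (int r * j - int N * int z)\<bar> \<le> real r / 2"
  defines "\<alpha> \<equiv> real_of_int (int r * j - int N * int z)"
    and "d \<equiv> gcd r z"
  defines "u \<equiv> (\<alpha> / real d, real (r div d) / 2)"
  shows "u \<in> lattice2 (real_of_int j, 1/2) (real N, 0)" and "u \<noteq> 0"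
    and "\<And>v. v \<in> lattice2 (real_of_int j, 1/2) (real N, 0) \<Longrightarrow> norm v \<le> norm u \<Longrightarrow>
      v = 0 \<or> v = u \<or> v = - u"
proof -
  define rt where "rt = r div d"
  define zt where "zt = z div d"
  have "d > 0" using assms(1) unfolding d_def by simp
  have r: "r = rt * d" and z: "z = zt * d" unfolding rt_def zt_def d_def by simp_all
  have "rt > 0" using r assms(1) by (cases rt) auto
  have "coprime rt zt" unfolding rt_def zt_def d_def using assms(1) by (intro div_gcd_coprime) auto
  have u_fst: "\<alpha> / real d = real rt * real_of_int j - real zt * real N"
    using \<open>d > 0\<close> unfolding \<alpha>_def r z by (simp add: field_simps)
  have u: "u = (real rt * real_of_int j - real zt * real N, real rt / 2)"
    unfolding u_def u_fst rt_def ..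
  show "u \<in> lattice2 (real_of_int j, 1/2) (real N, 0)"
    unfolding u lattice2_iff by (intro exI[of _ "int rt"] exI[of _ "- int zt"]) simp
  show "u \<noteq> 0" using \<open>rt > 0\<close> unfolding u by (simp add: zero_prod_def)
  have "\<bar>\<alpha>\<bar> \<le> real d * (real rt / 2)"
    using assms(3) unfolding \<alpha>_def[symmetric] by (simp add: r mult.commute)
  then have "\<bar>\<alpha> / real d\<bar> \<le> \<bar>real rt / 2\<bar>"
    using \<open>d > 0\<close> by (simp add: abs_divide divide_le_eq mult.commute)
  then have "(norm u)\<^sup>2 \<le> 2 * (real rt / 2)\<^sup>2"
    unfolding u_def rt_def[symmetric] norm_Pair by (simp add: abs_le_square_iff)
  also have "\<dots> \<le> (real r)\<^sup>2 / 2" using r \<open>d > 0\<close> by (simp add: power_divide power_mono mult_le_cancel_left1)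
  finally have norm_u: "(norm u)\<^sup>2 \<le> (real r)\<^sup>2 / 2" .
  fix v assume "v \<in> lattice2 (real_of_int j, 1/2) (real N, 0)" and "norm v \<le> norm u"
  then obtain a b :: int where v: "v = (of_int a * of_int j + of_int b * real N, of_int a / 2)"
    unfolding lattice2_iff by auto
  have "a * int z + b * int r = 0"
  proof (rule short_vector_residue_eq_0)
    show "real r * (of_int a * of_int j + of_int b * real N) =
        real N * of_int (a * int z + b * int r) + of_int a * \<alpha>"
      unfolding \<alpha>_def by (simp add: algebra_simps)
    have "(norm v)\<^sup>2 \<le> (norm u)\<^sup>2" using \<open>norm v \<le> norm u\<close> by (simp add: power_mono)
    then show "(of_int a * of_int j + of_int b * real N)\<^sup>2 + (of_int a / 2)\<^sup>2 \<le> (real r)\<^sup>2 / 2"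
      using norm_u unfolding v norm_Pair by (simp add: power_divide)
  qed (use assms(2,3) in \<open>simp_all add: \<alpha>_def flip: of_nat_power\<close>)
  then have "(a * int zt) * int d = (- b * int rt) * int d"
    unfolding r z by (simp add: algebra_simps)
  moreover have "int d \<noteq> 0" using \<open>d > 0\<close> by simp
  ultimately have "a * int zt = (- b) * int rt" by (metis mult_right_cancel)
  with \<open>coprime rt zt\<close> \<open>rt > 0\<close> have "\<exists>t. a = t * int rt \<and> - b = t * int zt"
    by (intro coprime_linear_relation) auto
  then obtain t where a: "a = t * int rt" and b: "b = - t * int zt" by (metis minus_equation_iff
    mult_minus_left)
  have "v = of_int t *\<^sub>R u"
    unfolding v u a b by (simp add: algebra_simps)
  moreover have "\<bar>of_int t\<bar> \<le> (1 :: real)"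
    using \<open>norm v \<le> norm u\<close> \<open>u \<noteq> 0\<close> \<open>v = of_int t *\<^sub>R u\<close> by (simp add: mult_le_cancel_right2)
  then have "t = 0 \<or> t = 1 \<or> t = -1" by linarith
  ultimately show "v = 0 \<or> v = u \<or> v = - u" by auto
qed

theorem lemma7:
  fixes r m l z :: nat
  assumes "r \<ge> 2" and "m > 0" and "l > 0"
    and "2 ^ m > r" and "2 ^ (m + l) > r ^ 2" and "z < r"
  defines "L \<equiv> lattice2 (real_of_int (j0 r m l z), 1/2) (2 ^ (m + l), 0)"
    and "u \<equiv> (real_of_int (alpha0 r m l z) / real (gcd r z), real (r div gcd r z) / 2)"
  shows "u \<in> L \<and> u \<noteq> 0
    \<and> (\<forall>v\<in>L. v \<noteq> 0 \<and> v \<noteq> u \<and> v \<noteq> - u \<longrightarrow> norm u < norm v)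
    \<and> snd u = real r / (2 * real (gcd r z))"
proof -
  define N :: nat where "N = 2 ^ (m + l)"
  have "r > 0" and "r\<^sup>2 < N" using assms(1,5) unfolding N_def by simp_all
  have alpha: "alpha0 r m l z = int r * j0 r m l z - int N * int z"
    unfolding alpha0_def N_def by simp
  have L: "L = lattice2 (real_of_int (j0 r m l z), 1/2) (real N, 0)"
    unfolding L_def N_def by simp
  note shortest = lattice2_shortest_vector[of r N "j0 r m l z" z, folded alpha, folded L u_def,
      OF \<open>r > 0\<close> \<open>r\<^sup>2 < N\<close> abs_alpha0_le[OF \<open>r > 0\<close>]]
  have "\<forall>v\<in>L. v \<noteq> 0 \<and> v \<noteq> u \<and> v \<noteq> - u \<longrightarrow> norm u < norm v"
    using shortest(3) by (metis not_le)
  moreover have "snd u = real r / (2 * real (gcd r z))"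
    unfolding u_def using \<open>r > 0\<close> by (simp add: real_of_nat_div)
  ultimately show ?thesis using shortest(1,2) by blast
qed

end
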